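(* Let $p$ be a polynomial in one real variable (with real coefficients) all of whose roots are negative real numbers and whose leading coefficient is positive. Then $p(n)>0$ for all $n\in\mathbb Z_+$ and $\{1/p(n)\}_{n=0}^\infty$ is a Hausdorff moment sequence.
   Context: A sequence $\{a_n\}_{n\ge0}$ of reals is a Hausdorff moment sequence if there is a positive Borel measure $\mu$ on $[0,1]$ with $a_n=\int_{[0,1]}x^n\,d\mu(x)$ for all $n\in\mathbb Z_+$. *)

theory Defs
  imports "HOL-Analysis.Analysis" "HOL-Computational_Algebra.Polynomial"
begin

definition hausdorff_moment_seq :: "(nat \<Rightarrow> real) \<Rightarrow> bool" where
  "hausdorff_moment_seq a \<longleftrightarrow>
     (\<exists>M :: real measure. sets M = sets (restrict_space borel {0..1}) \<and>
        (\<forall>n. integrable M (\<lambda>x. x ^ n) \<and> a n = (\<integral>x. x ^ n \<partial>M)))"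

end

theory Submission
  imports Defs "HOL-Probability.Giry_Monad" "HOL-Computational_Algebra.Fundamental_Theorem_Algebra"
begin

text \<open>Factor p(x) = c (x + b_1) ... (x + b_k) with c > 0 and all b_i > 0.  Then p(n) > 0,
  and 1/p(n) is the product of the constant 1/c and the sequences 1/(n + b_i).  The latter is
  the moment sequence of the density x powr (b - 1) on [0,1], and Hausdorff moment sequences are
  closed under pointwise products: the moments of the image of mu x nu under (x,y) |-> xy are
  the products of the moments of mu and nu.\<close>

lemma space_eq_unit_interval:
  assumes "sets M = sets (restrict_space borel {0..1::real})"
  shows "space M = {0..1}"
  using sets_eq_imp_space_eq[OF assms] by simp

lemma borel_measurable_unit_interval:
  assumes "sets M = sets (restrict_space borel {0..1::real})"
    and "f \<in> borel_measurable borel"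
  shows "f \<in> borel_measurable M"
  using measurable_cong_sets[OF assms(1) refl] measurable_restrict_space1 assms(2) by blast

lemma hausdorff_moment_seq_iff_nn_integral:
  "hausdorff_moment_seq a \<longleftrightarrow>
     (\<exists>M :: real measure. sets M = sets (restrict_space borel {0..1}) \<and>
        (\<forall>n. 0 \<le> a n \<and> (\<integral>\<^sup>+x. ennreal (x ^ n) \<partial>M) = ennreal (a n)))"
    (is "_ \<longleftrightarrow> (\<exists>M. ?sets M \<and> ?moments M)")
proof -
  have "(\<forall>n. integrable M (\<lambda>x. x ^ n) \<and> a n = (\<integral>x. x ^ n \<partial>M)) \<longleftrightarrow> ?moments M"
    if "?sets M" for M
  proof -
    have meas: "(\<lambda>x. x ^ n) \<in> borel_measurable M" for n
      by (rule borel_measurable_unit_interval[OF that]) simp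
    have nonneg: "AE x in M. 0 \<le> x ^ n" for n :: nat
      using space_eq_unit_interval[OF that] by (intro AE_I2) simp
    show ?thesis
    proof (intro iffI allI)
      fix n assume "\<forall>n. integrable M (\<lambda>x. x ^ n) \<and> a n = (\<integral>x. x ^ n \<partial>M)"
      then show "0 \<le> a n \<and> (\<integral>\<^sup>+x. ennreal (x ^ n) \<partial>M) = ennreal (a n)"
        using nonneg by (simp add: nn_integral_eq_integral integral_nonneg_AE)
    next
      fix n assume "?moments M"
      then have "(\<integral>\<^sup>+x. ennreal (x ^ n) \<partial>M) = ennreal (a n)" "0 \<le> a n" by auto
      then show "integrable M (\<lambda>x. x ^ n) \<and> a n = (\<integral>x. x ^ n \<partial>M)"
        using meas nonneg by (simp add: integrableI_nonneg integral_eq_nn_integral)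
    qed
  qed
  then show ?thesis
    unfolding hausdorff_moment_seq_def by blast
qed

lemma hausdorff_moment_seq_const:
  assumes "0 \<le> c"
  shows "hausdorff_moment_seq (\<lambda>_. c)"
proof -
  let ?M = "density (return (restrict_space borel {0..1::real}) 1) (\<lambda>_. ennreal c)"
  have "(\<integral>\<^sup>+x. ennreal (x ^ n) \<partial>?M) = ennreal c" for n
    by (simp add: nn_integral_density nn_integral_return measurable_restrict_space1)
  moreover have "sets ?M = sets (restrict_space borel {0..1})" by simp
  ultimately show ?thesis
    unfolding hausdorff_moment_seq_iff_nn_integral using assms by blast
qed

lemma hausdorff_moment_seq_mult:
  assumes "hausdorff_moment_seq a" and "hausdorff_moment_seq b"
  shows "hausdorff_moment_seq (\<lambda>n. a n * b n)"
proof -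
  obtain M where sets_M: "sets M = sets (restrict_space borel {0..1::real})"
    and M: "\<And>n. 0 \<le> a n" "\<And>n. (\<integral>\<^sup>+x. ennreal (x ^ n) \<partial>M) = ennreal (a n)"
    using assms(1) unfolding hausdorff_moment_seq_iff_nn_integral by blast
  obtain N where sets_N: "sets N = sets (restrict_space borel {0..1::real})"
    and N: "\<And>n. 0 \<le> b n" "\<And>n. (\<integral>\<^sup>+x. ennreal (x ^ n) \<partial>N) = ennreal (b n)"
    using assms(2) unfolding hausdorff_moment_seq_iff_nn_integral by blast
  have "emeasure N (space N) = ennreal (b 0)"
    using N(2)[of 0] by simp
  then interpret N: finite_measure N
    by (intro finite_measureI) simp
  have id_meas: "(\<lambda>x. x) \<in> borel_measurable M" "(\<lambda>x. x) \<in> borel_measurable N"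
    by (simp_all add: borel_measurable_unit_interval[OF sets_M] borel_measurable_unit_interval[OF sets_N])
  then have mult_meas: "(\<lambda>(x, y). x * y) \<in> borel_measurable (M \<Otimes>\<^sub>M N)"
    by measurable
  have mult_meas': "(\<lambda>(x, y). x * y) \<in> measurable (M \<Otimes>\<^sub>M N) (restrict_space borel {0..1})"
    by (rule measurable_restrict_space2[OF _ mult_meas])
      (auto simp: space_pair_measure space_eq_unit_interval[OF sets_M]
        space_eq_unit_interval[OF sets_N] intro: mult_le_one)
  let ?MN = "distr (M \<Otimes>\<^sub>M N) (restrict_space borel {0..1}) (\<lambda>(x, y). x * y)"
  have "(\<integral>\<^sup>+z. ennreal (z ^ n) \<partial>?MN) = ennreal (a n * b n)" for n
  proof -
    have "(\<integral>\<^sup>+z. ennreal (z ^ n) \<partial>?MN) = (\<integral>\<^sup>+(x, y). ennreal ((x * y) ^ n) \<partial>(M \<Otimes>\<^sub>M N))"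
      by (subst nn_integral_distr[OF mult_meas']) (simp_all add: measurable_restrict_space1 case_prod_beta')
    also have "\<dots> = (\<integral>\<^sup>+x. \<integral>\<^sup>+y. ennreal ((x * y) ^ n) \<partial>N \<partial>M)"
    proof -
      have "(\<lambda>(x, y). ennreal ((x * y) ^ n)) \<in> borel_measurable (M \<Otimes>\<^sub>M N)"
        using id_meas by measurable
      from N.nn_integral_fst[OF this] show ?thesis by simp
    qed
    also have "\<dots> = (\<integral>\<^sup>+x. ennreal (x ^ n) * ennreal (b n) \<partial>M)"
    proof (rule nn_integral_cong)
      fix x assume "x \<in> space M"
      then have "0 \<le> x"
        by (simp add: space_eq_unit_interval[OF sets_M])
      then have "(\<integral>\<^sup>+y. ennreal ((x * y) ^ n) \<partial>N) = (\<integral>\<^sup>+y. ennreal (x ^ n) * ennreal (y ^ n) \<partial>N)"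
        by (intro nn_integral_cong)
          (auto simp: space_eq_unit_interval[OF sets_N] power_mult_distrib ennreal_mult)
      also have "\<dots> = ennreal (x ^ n) * ennreal (b n)"
        by (subst nn_integral_cmult) (auto simp: N intro: borel_measurable_unit_interval[OF sets_N])
      finally show "(\<integral>\<^sup>+y. ennreal ((x * y) ^ n) \<partial>N) = ennreal (x ^ n) * ennreal (b n)" .
    qed
    also have "\<dots> = ennreal (a n * b n)"
      by (subst nn_integral_multc)
        (auto simp: M N ennreal_mult intro: borel_measurable_unit_interval[OF sets_M])
    finally show ?thesis .
  qed
  moreover have "sets ?MN = sets (restrict_space borel {0..1})" by simp
  ultimately show ?thesis
    unfolding hausdorff_moment_seq_iff_nn_integral using M N by (auto intro!: exI[of _ ?MN])
qed

lemma hausdorff_moment_seq_prod: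
  assumes "\<And>i. i \<in> I \<Longrightarrow> hausdorff_moment_seq (f i)"
  shows "hausdorff_moment_seq (\<lambda>n. \<Prod>i\<in>I. f i n)"
  using assms
proof (induction I rule: infinite_finite_induct)
  case (insert i I)
  then show ?case
    using hausdorff_moment_seq_mult[of "f i" "\<lambda>n. \<Prod>i\<in>I. f i n"] by simp
qed (simp_all add: hausdorff_moment_seq_const)

lemma hausdorff_moment_seq_inverse_shift:
  assumes "0 < b"
  shows "hausdorff_moment_seq (\<lambda>n. 1 / (real n + b))"
proof -
  let ?M = "density (restrict_space lborel {0..1::real}) (\<lambda>x. ennreal (x powr (b - 1)))"
  have "(\<integral>\<^sup>+x. ennreal (x ^ n) \<partial>?M) = ennreal (1 / (real n + b))" for n
  proof -
    have "(\<integral>\<^sup>+x. ennreal (x ^ n) \<partial>?M)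
        = (\<integral>\<^sup>+x. ennreal (x powr (b - 1)) * ennreal (x ^ n) \<partial>restrict_space lborel {0..1})"
      by (subst nn_integral_density) (auto intro!: measurable_restrict_space1)
    also have "\<dots> = (\<integral>\<^sup>+x. ennreal (x powr (b - 1 + real n)) \<partial>restrict_space lborel {0..1})"
    proof (rule nn_integral_cong)
      fix x :: real assume "x \<in> space (restrict_space lborel {0..1})"
      then have "0 \<le> x" by simp
      then have "x powr (b - 1) * x ^ n = x powr (b - 1 + real n)"
        by (cases "x = 0") (simp_all add: powr_realpow[symmetric] powr_add[symmetric])
      with \<open>0 \<le> x\<close>
      show "ennreal (x powr (b - 1)) * ennreal (x ^ n) = ennreal (x powr (b - 1 + real n))"
        by (simp add: ennreal_mult[symmetric])
    qed
    also have "\<dots> = (\<integral>\<^sup>+x. ennreal (x powr (b - 1 + real n)) * indicator {0..1} x \<partial>lborel)"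
      by (simp add: nn_integral_restrict_space)
    also have "\<dots> = ennreal (1 / (real n + b))"
    proof (rule nn_integral_has_integral_lebesgue')
      have "((\<lambda>x. x powr (b - 1 + real n)) has_integral 1 / (b + real n)) {0..1}"
        using has_integral_powr_from_0[of "b - 1 + real n" 1] assms by simp
      then show "((\<lambda>x. x powr (b - 1 + real n)) has_integral 1 / (real n + b)) {0..1}"
        by (subst add.commute)
    qed simp
    finally show ?thesis .
  qed
  moreover have "sets ?M = sets (restrict_space borel {0..1})"
    using sets_restrict_space_cong[OF sets_lborel] by simp
  ultimately show ?thesis
    unfolding hausdorff_moment_seq_iff_nn_integral using assms by (auto intro!: exI[of _ ?M])
qed

lemma poly_map_poly_of_real:
  "poly (map_poly of_real p) (of_real x) = (of_real (poly p x) :: 'a::{real_algebra_1,comm_semiring_0})"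
  by (induction p) (simp_all add: map_poly_pCons)

lemma poly_eq_lead_coeff_prod_shifts:
  fixes p :: "real poly"
  assumes "\<forall>z::complex. poly (map_poly complex_of_real p) z = 0 \<longrightarrow> z \<in> \<real> \<and> Re z < 0"
  obtains b where "\<And>i. i < degree p \<Longrightarrow> 0 < b i"
    and "\<And>x. poly p x = lead_coeff p * (\<Prod>i<degree p. x + b i)"
proof -
  let ?q = "map_poly complex_of_real p"
  obtain root where decomp: "smult (lead_coeff ?q) (\<Prod>i<degree ?q. [:-root i, 1:]) = ?q"
    by (rule complex_poly_decompose')
  have poly_q: "poly ?q z = of_real (lead_coeff p) * (\<Prod>i<degree p. z - root i)" for z
    using arg_cong[OF decomp, of "\<lambda>f. poly f z"]
    by (simp add: poly_prod degree_map_poly coeff_map_poly)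
  have root_real_neg: "root i \<in> \<real> \<and> Re (root i) < 0" if "i < degree p" for i
  proof -
    have "(\<Prod>j<degree p. root i - root j) = 0"
      using that by (intro prod_zero) auto
    then have "poly ?q (root i) = 0"
      by (simp add: poly_q)
    then show ?thesis using assms by blast
  qed
  show ?thesis
  proof
    fix i assume "i < degree p"
    then show "0 < - Re (root i)" using root_real_neg by simp
  next
    fix x
    have "complex_of_real (poly p x) = poly ?q (of_real x)"
      by (simp add: poly_map_poly_of_real)
    also have "\<dots> = of_real (lead_coeff p * (\<Prod>i<degree p. x + - Re (root i)))"
      unfolding poly_q using root_real_neg
      by (simp add: complex_eq_iff Reals_def)
    finally show "poly p x = lead_coeff p * (\<Prod>i<degree p. x + - Re (root i))"
      using of_real_eq_iff by blast
  qed
qed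

theorem proposition3p2:
  fixes p :: "real poly"
  assumes "lead_coeff p > 0"
    and "\<forall>z::complex. poly (map_poly complex_of_real p) z = 0 \<longrightarrow> z \<in> \<real> \<and> Re z < 0"
  shows "(\<forall>n::nat. poly p (real n) > 0) \<and> hausdorff_moment_seq (\<lambda>n. 1 / poly p (real n))"
proof -
  obtain b where b_pos: "\<And>i. i < degree p \<Longrightarrow> 0 < b i"
    and p_eq: "\<And>x. poly p x = lead_coeff p * (\<Prod>i<degree p. x + b i)"
    using poly_eq_lead_coeff_prod_shifts[OF assms(2)] by blast
  have "poly p (real n) > 0" for n
    unfolding p_eq using assms(1) b_pos by (intro mult_pos_pos prod_pos) (auto intro: add_nonneg_pos)
  moreover have "hausdorff_moment_seq (\<lambda>n. 1 / lead_coeff p * (\<Prod>i<degree p. 1 / (real n + b i)))"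
    using assms(1) b_pos
    by (intro hausdorff_moment_seq_mult hausdorff_moment_seq_const hausdorff_moment_seq_prod
        hausdorff_moment_seq_inverse_shift) simp_all
  ultimately show ?thesis
    by (simp add: p_eq prod_dividef)
qed

end
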